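(* Let $\Gamma$ be a metric graph and $D$ a vertex-supported effective divisor on $\Gamma$. Then each vertex (0-dimensional cell) of the cell complex $|D|$ is an anchor cell.
   Context: A metric graph $\Gamma=(V,E)$ is a connected undirected graph whose edges have positive real lengths $M_e$. Divisors are finite formal $\mathbb{Z}$-combinations of points of $\Gamma$; effective means nonnegative coefficients, vertex-supported means support in $V$. A rational function is continuous, piecewise linear on edges with finitely many pieces and integer slopes; $(f)=\sum_x\mathrm{ord}_x(f)x$ with $\mathrm{ord}_x(f)$ the sum of outgoing slopes at $x$. $R(D)=\{f:D+(f)\ge 0\}$, $|D|=\{D+(f):f\in R(D)\}$. Cells of $|D|$: identifying each open edge $e$ with $(0,M_e)$, a cell is given by nonnegative integers $d_v$ ($v\in V$), ordered partitions $d_e=\sum_{i=1}^{r_e}d_e^i$ into positive integers on some edges, and integers $m_e$ ($e\in E$); $L\in|D|$ belongs to it iff $L(v)=d_v$, $L|_{e^\circ}=\sum_i d_e^i x_i$ with $0<x_1<\dots<x_{r_e}<M_e$ on edges with a partition and $L|_{e^\circ}=0$ otherwise, and each $f\in R(D)$ with $L=D+(f)$ has outgoing slope $m_e$ at $0\in e$. Elements of a cell are its representatives. For a representative $L$ of a cell $C$, with $I_L=\{x\in\Gamma\setminus V: L(x)>0\}$, $\dim C$ is one less than the number of connected components of $\Gamma\setminus I_L$. A divisor $L$ is an anchor divisor if for each edge of $\Gamma$ there is at most one interior point $x$ of that edge with $L(x)>0$. A cell of $|D|$ is an anchor cell if all its representatives are anchor divisors. *)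

theory Defs
  imports "HOL-Analysis.Analysis"
begin

text \<open>A metric graph: finite vertex set, finite edge set, each edge oriented from
  its source to its target (to identify the open edge with (0, len e)), positive length.
  Loops and multiple edges are allowed.\<close>

record ('v, 'e) mgraph =
  verts :: "'v set"
  edges :: "'e set"
  src :: "'e \<Rightarrow> 'v"
  tgt :: "'e \<Rightarrow> 'v"
  len :: "'e \<Rightarrow> real"

text \<open>Points of the metric graph: a vertex, or the interior point of edge e at distance t from src e.\<close>
datatype ('v, 'e) gpt = Vtx 'v | Pt 'e real

definition connected_graph :: "('v, 'e) mgraph \<Rightarrow> bool" where
  "connected_graph G \<longleftrightarrow> verts G \<noteq> {} \<and>
     (\<forall>u\<in>verts G. \<forall>w\<in>verts G.
        (u, w) \<in> ({(src G e, tgt G e) | e. e \<in> edges G} \<union> {(tgt G e, src G e) | e. e \<in> edges G})\<^sup>*)"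

definition metric_graph :: "('v, 'e) mgraph \<Rightarrow> bool" where
  "metric_graph G \<longleftrightarrow> finite (verts G) \<and> finite (edges G) \<and>
     (\<forall>e\<in>edges G. src G e \<in> verts G \<and> tgt G e \<in> verts G \<and> len G e > 0) \<and>
     connected_graph G"

definition pts :: "('v, 'e) mgraph \<Rightarrow> ('v, 'e) gpt set" where
  "pts G = Vtx ` verts G \<union> {Pt e t | e t. e \<in> edges G \<and> 0 < t \<and> t < len G e}"

definition ppos :: "('v, 'e) mgraph \<Rightarrow> 'e \<Rightarrow> real \<Rightarrow> ('v, 'e) gpt" where
  "ppos G e t = (if t \<le> 0 then Vtx (src G e) else if len G e \<le> t then Vtx (tgt G e) else Pt e t)"

text \<open>Topology of the metric graph: quotient topology of the closed intervals [0, len e]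
  glued at the vertices (isolated vertices being open points).\<close>
definition gtop :: "('v, 'e) mgraph \<Rightarrow> ('v, 'e) gpt topology" where
  "gtop G = topology (\<lambda>U. U \<subseteq> pts G \<and>
     (\<forall>e\<in>edges G. openin (top_of_set {0..len G e}) {t \<in> {0..len G e}. ppos G e t \<in> U}))"

type_synonym ('v, 'e) divisor = "('v, 'e) gpt \<Rightarrow> int"

definition is_divisor :: "('v, 'e) mgraph \<Rightarrow> ('v, 'e) divisor \<Rightarrow> bool" where
  "is_divisor G D \<longleftrightarrow> finite {x. D x \<noteq> 0} \<and> {x. D x \<noteq> 0} \<subseteq> pts G"

definition effective :: "('v, 'e) divisor \<Rightarrow> bool" where
  "effective D \<longleftrightarrow> (\<forall>x. D x \<ge> 0)"

definition vertex_supported :: "('v, 'e) mgraph \<Rightarrow> ('v, 'e) divisor \<Rightarrow> bool" where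
  "vertex_supported G D \<longleftrightarrow> (\<forall>x. D x \<noteq> 0 \<longrightarrow> x \<in> Vtx ` verts G)"

definition epar :: "('v, 'e) mgraph \<Rightarrow> (('v, 'e) gpt \<Rightarrow> real) \<Rightarrow> 'e \<Rightarrow> real \<Rightarrow> real" where
  "epar G f e t = f (ppos G e t)"

definition pl_int :: "(real \<Rightarrow> real) \<Rightarrow> real \<Rightarrow> bool" where
  "pl_int g M \<longleftrightarrow> (\<exists>P. finite P \<and> P \<subseteq> {0..M} \<and> 0 \<in> P \<and> M \<in> P \<and>
     (\<forall>a\<in>P. \<forall>b\<in>P. a < b \<and> {a<..<b} \<inter> P = {} \<longrightarrow>
        (\<exists>k::int. \<forall>t\<in>{a..b}. g t = g a + of_int k * (t - a))))"

definition rational_fn :: "('v, 'e) mgraph \<Rightarrow> (('v, 'e) gpt \<Rightarrow> real) \<Rightarrow> bool" where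
  "rational_fn G f \<longleftrightarrow> (\<forall>e\<in>edges G. pl_int (epar G f e) (len G e))"

definition rslope :: "('v, 'e) mgraph \<Rightarrow> (('v, 'e) gpt \<Rightarrow> real) \<Rightarrow> 'e \<Rightarrow> real \<Rightarrow> real" where
  "rslope G f e t = (SOME s. (epar G f e has_real_derivative s) (at_right t))"

definition lslope :: "('v, 'e) mgraph \<Rightarrow> (('v, 'e) gpt \<Rightarrow> real) \<Rightarrow> 'e \<Rightarrow> real \<Rightarrow> real" where
  "lslope G f e t = (SOME s. (epar G f e has_real_derivative s) (at_left t))"

text \<open>ord_x(f): sum of the outgoing slopes of f at x.\<close>
fun ord :: "('v, 'e) mgraph \<Rightarrow> (('v, 'e) gpt \<Rightarrow> real) \<Rightarrow> ('v, 'e) gpt \<Rightarrow> real" where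
  "ord G f (Vtx v) = (\<Sum>e\<in>{e\<in>edges G. src G e = v}. rslope G f e 0)
                   + (\<Sum>e\<in>{e\<in>edges G. tgt G e = v}. - lslope G f e (len G e))"
| "ord G f (Pt e t) = rslope G f e t - lslope G f e t"

definition pdiv :: "('v, 'e) mgraph \<Rightarrow> (('v, 'e) gpt \<Rightarrow> real) \<Rightarrow> ('v, 'e) divisor" where
  "pdiv G f x = (if x \<in> pts G then \<lfloor>ord G f x\<rfloor> else 0)"

definition Rsp :: "('v, 'e) mgraph \<Rightarrow> ('v, 'e) divisor \<Rightarrow> (('v, 'e) gpt \<Rightarrow> real) set" where
  "Rsp G D = {f. rational_fn G f \<and> (\<forall>x. D x + pdiv G f x \<ge> 0)}"

definition linsys :: "('v, 'e) mgraph \<Rightarrow> ('v, 'e) divisor \<Rightarrow> ('v, 'e) divisor set" where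
  "linsys G D = (\<lambda>f x. D x + pdiv G f x) ` Rsp G D"

text \<open>Cell data: dv v = d_v; prt e = ordered partition of d_e (the empty list meaning that
  no partition is given on e); m e = m_e. The cell is its set of representatives.\<close>
definition cell_data_ok :: "('e \<Rightarrow> nat list) \<Rightarrow> bool" where
  "cell_data_ok prt \<longleftrightarrow> (\<forall>e. \<forall>k\<in>set (prt e). k > 0)"

definition cell :: "('v, 'e) mgraph \<Rightarrow> ('v, 'e) divisor \<Rightarrow> ('v \<Rightarrow> nat) \<Rightarrow> ('e \<Rightarrow> nat list)
                     \<Rightarrow> ('e \<Rightarrow> int) \<Rightarrow> ('v, 'e) divisor set" where
  "cell G D dv prt m = {L \<in> linsys G D.
      (\<forall>v\<in>verts G. L (Vtx v) = int (dv v)) \<and>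
      (\<forall>e\<in>edges G. \<exists>xs::real list. length xs = length (prt e) \<and> sorted_wrt (<) xs \<and>
          (\<forall>x\<in>set xs. 0 < x \<and> x < len G e) \<and>
          (\<forall>t. 0 < t \<and> t < len G e \<longrightarrow>
               L (Pt e t) = (\<Sum>i<length xs. if xs ! i = t then int (prt e ! i) else 0))) \<and>
      (\<forall>f\<in>Rsp G D. L = (\<lambda>x. D x + pdiv G f x) \<longrightarrow> (\<forall>e\<in>edges G. rslope G f e 0 = of_int (m e)))}"

definition is_cell :: "('v, 'e) mgraph \<Rightarrow> ('v, 'e) divisor \<Rightarrow> ('v, 'e) divisor set \<Rightarrow> bool" where
  "is_cell G D C \<longleftrightarrow> (\<exists>dv prt m. cell_data_ok prt \<and> C = cell G D dv prt m)"

definition IL :: "('v, 'e) mgraph \<Rightarrow> ('v, 'e) divisor \<Rightarrow> ('v, 'e) gpt set" where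
  "IL G L = {x \<in> pts G - Vtx ` verts G. L x > 0}"

definition rep_dim :: "('v, 'e) mgraph \<Rightarrow> ('v, 'e) divisor \<Rightarrow> int" where
  "rep_dim G L = int (card (connected_components_of (subtopology (gtop G) (pts G - IL G L)))) - 1"

definition anchor_divisor :: "('v, 'e) mgraph \<Rightarrow> ('v, 'e) divisor \<Rightarrow> bool" where
  "anchor_divisor G L \<longleftrightarrow> (\<forall>e\<in>edges G. \<forall>s t. 0 < s \<and> s < len G e \<and> 0 < t \<and> t < len G e \<and>
       L (Pt e s) > 0 \<and> L (Pt e t) > 0 \<longrightarrow> s = t)"

definition anchor_cell :: "('v, 'e) mgraph \<Rightarrow> ('v, 'e) divisor set \<Rightarrow> bool" where
  "anchor_cell G C \<longleftrightarrow> (\<forall>L\<in>C. anchor_divisor G L)"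

end

theory Submission
  imports Defs
begin

text \<open>
  All representatives of a cell have the same number of interior support points on each edge,
  namely the length of the ordered partition. If some edge had a partition of length at
  least two, a 0-dimensional representative would have two consecutive interior points
  a < b of positive degree on that edge; the open arc between them is then open and closed
  in the complement of the interior support, and it misses the endpoint vertices, so this
  complement would be disconnected, i.e. the dimension would be positive. Hence every
  partition has length at most one, and every representative is an anchor divisor.
\<close>

lemma openin_gtop:
  "openin (gtop G) U \<longleftrightarrow> U \<subseteq> pts G \<and>
     (\<forall>e\<in>edges G. openin (top_of_set {0..len G e}) {t \<in> {0..len G e}. ppos G e t \<in> U})"
proof -
  define P where "P = (\<lambda>U. U \<subseteq> pts G \<and>
     (\<forall>e\<in>edges G. openin (top_of_set {0..len G e}) {t \<in> {0..len G e}. ppos G e t \<in> U}))"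
  have Int: "P (S \<inter> T)" if "P S" "P T" for S T
  proof -
    have "{t \<in> {0..len G e}. ppos G e t \<in> S \<inter> T} =
          {t \<in> {0..len G e}. ppos G e t \<in> S} \<inter> {t \<in> {0..len G e}. ppos G e t \<in> T}" for e
      by auto
    then show ?thesis using that unfolding P_def by (auto intro!: openin_Int)
  qed
  have Union: "P (\<Union>K)" if "\<forall>k\<in>K. P k" for K
  proof -
    have "{t \<in> {0..len G e}. ppos G e t \<in> \<Union>K} = (\<Union>k\<in>K. {t \<in> {0..len G e}. ppos G e t \<in> k})" for e
      by auto
    then show ?thesis using that unfolding P_def by (auto intro!: openin_Union)
  qed
  have "istopology P" unfolding istopology_def using Int Union by blast
  then show ?thesis unfolding gtop_def P_def[symmetric] by (simp add: P_def)
qed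

lemma topspace_gtop:
  assumes "metric_graph G"
  shows "topspace (gtop G) = pts G"
proof -
  have "openin (gtop G) (pts G)"
    unfolding openin_gtop
  proof (intro conjI ballI)
    fix e assume "e \<in> edges G"
    then have "{t \<in> {0..len G e}. ppos G e t \<in> pts G} = {0..len G e}"
      using assms unfolding metric_graph_def ppos_def pts_def by auto
    then show "openin (top_of_set {0..len G e}) {t \<in> {0..len G e}. ppos G e t \<in> pts G}"
      by simp
  qed simp
  then show ?thesis
    using openin_subset openin_gtop[of G "topspace (gtop G)"] by blast
qed

lemma openin_gtop_open_arc:
  assumes "e \<in> edges G" "0 \<le> a" "b \<le> len G e"
  shows "openin (gtop G) {Pt e t | t. a < t \<and> t < b}"
  unfolding openin_gtop
proof (intro conjI ballI)
  show "{Pt e t | t. a < t \<and> t < b} \<subseteq> pts G"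
    using assms unfolding pts_def by auto
  fix e' assume "e' \<in> edges G"
  show "openin (top_of_set {0..len G e'}) {t \<in> {0..len G e'}. ppos G e' t \<in> {Pt e t | t. a < t \<and> t < b}}"
  proof (cases "e' = e")
    case True
    then have "{t \<in> {0..len G e'}. ppos G e' t \<in> {Pt e t | t. a < t \<and> t < b}} = {0..len G e'} \<inter> {a<..<b}"
      using assms unfolding ppos_def by auto
    then show ?thesis by (simp add: openin_open_Int)
  next
    case False
    then show ?thesis unfolding ppos_def by simp
  qed
qed

lemma openin_gtop_minus_closed_arc:
  assumes "metric_graph G" "e \<in> edges G" "0 < a" "b < len G e"
  shows "openin (gtop G) (pts G - {Pt e t | t. a \<le> t \<and> t \<le> b})"
  unfolding openin_gtop
proof (intro conjI ballI)
  fix e' assume e': "e' \<in> edges G"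
  then have ends: "src G e' \<in> verts G" "tgt G e' \<in> verts G"
    using assms(1) unfolding metric_graph_def by auto
  show "openin (top_of_set {0..len G e'}) {t \<in> {0..len G e'}. ppos G e' t \<in> pts G - {Pt e t | t. a \<le> t \<and> t \<le> b}}"
  proof (cases "e' = e")
    case True
    then have "{t \<in> {0..len G e'}. ppos G e' t \<in> pts G - {Pt e t | t. a \<le> t \<and> t \<le> b}} = {0..len G e'} \<inter> - {a..b}"
      using assms ends unfolding ppos_def pts_def by auto
    then show ?thesis by (simp add: openin_open_Int open_Compl)
  next
    case False
    then have "{t \<in> {0..len G e'}. ppos G e' t \<in> pts G - {Pt e t | t. a \<le> t \<and> t \<le> b}} = {0..len G e'}"
      using e' ends unfolding ppos_def pts_def by auto
    then show ?thesis by simp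
  qed
qed auto

text \<open>Removing two interior points of an edge cuts off the open arc between them.\<close>

lemma not_connected_space_arc_cut:
  assumes mg: "metric_graph G" and e: "e \<in> edges G"
    and ab: "0 < a" "a < m" "m < b" "b < len G e"
    and X: "X \<subseteq> pts G" "Pt e a \<notin> X" "Pt e b \<notin> X" "Pt e m \<in> X" "Vtx (src G e) \<in> X"
  shows "\<not> connected_space (subtopology (gtop G) X)"
proof
  assume con: "connected_space (subtopology (gtop G) X)"
  define T where "T = {Pt e t | t. a < t \<and> t < b} \<inter> X"
  have topspace: "topspace (subtopology (gtop G) X) = X"
    using topspace_gtop[OF mg] X(1) by auto
  have "openin (subtopology (gtop G) X) T"
    unfolding T_def openin_subtopology
    using openin_gtop_open_arc[OF e, of a b] ab by auto
  moreover have "X - T = (pts G - {Pt e t | t. a \<le> t \<and> t \<le> b}) \<inter> X"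
    using X(1-3) unfolding T_def by (auto simp: le_less)
  then have "openin (subtopology (gtop G) X) (X - T)"
    unfolding openin_subtopology
    using openin_gtop_minus_closed_arc[OF mg e ab(1) ab(4)] by blast
  then have "closedin (subtopology (gtop G) X) T"
    unfolding closedin_def topspace T_def by auto
  ultimately have "T = {} \<or> T = X"
    using con unfolding connected_space_clopen_in topspace by blast
  moreover have "Pt e m \<in> T" "Vtx (src G e) \<notin> T"
    using ab X(4) unfolding T_def by auto
  ultimately show False using X by blast
qed

lemma connected_space_if_rep_dim_zero:
  assumes "rep_dim G L = 0"
  shows "connected_space (subtopology (gtop G) (pts G - IL G L))"
proof -
  have "card (connected_components_of (subtopology (gtop G) (pts G - IL G L))) = 1"
    using assms unfolding rep_dim_def by linarith
  then show ?thesis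
    using connected_components_of_eq_singleton card_1_singletonE by metis
qed

lemma rep_dim_nonzero_if_gap:
  assumes mg: "metric_graph G" and e: "e \<in> edges G"
    and ab: "0 < a" "a < b" "b < len G e"
    and pos: "L (Pt e a) > 0" "L (Pt e b) > 0"
    and gap: "\<forall>t. a < t \<and> t < b \<longrightarrow> L (Pt e t) \<le> 0"
  shows "rep_dim G L \<noteq> 0"
proof -
  define m where "m = (a + b) / 2"
  have m: "a < m" "m < b" unfolding m_def using ab by auto
  have src: "src G e \<in> verts G" using mg e unfolding metric_graph_def by auto
  have "\<not> connected_space (subtopology (gtop G) (pts G - IL G L))"
  proof (rule not_connected_space_arc_cut[OF mg e ab(1) m ab(3)])
    show "Pt e a \<notin> pts G - IL G L" "Pt e b \<notin> pts G - IL G L"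
      using ab pos e unfolding IL_def pts_def by auto
    show "Pt e m \<in> pts G - IL G L"
      using m ab gap e unfolding IL_def pts_def by force
    show "Vtx (src G e) \<in> pts G - IL G L"
      using src unfolding IL_def pts_def by auto
  qed auto
  then show ?thesis using connected_space_if_rep_dim_zero by blast
qed

lemma sum_sorted_positions_single:
  assumes "sorted_wrt (<) (ys::real list)" "k < length ys"
  shows "(\<Sum>i<length ys. if ys ! i = ys ! k then (c i::int) else 0) = c k"
proof -
  have "ys ! i = ys ! k \<longleftrightarrow> i = k" if "i < length ys" for i
    using sorted_wrt_nth_less[OF assms(1)] that assms(2) by (metis less_irrefl linorder_neqE_nat)
  then have "(\<Sum>i<length ys. if ys ! i = ys ! k then c i else 0) = (\<Sum>i<length ys. if i = k then c i else 0)"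
    by (intro sum.cong) auto
  also have "\<dots> = c k" using assms(2) by simp
  finally show ?thesis .
qed

lemma cell_rep_edge_positions:
  assumes "L \<in> cell G D dv prt m" "e \<in> edges G"
  obtains xs :: "real list" where "length xs = length (prt e)" "sorted_wrt (<) xs"
    "\<forall>x\<in>set xs. 0 < x \<and> x < len G e"
    "\<forall>t. 0 < t \<and> t < len G e \<longrightarrow> L (Pt e t) = (\<Sum>i<length xs. if xs ! i = t then int (prt e ! i) else 0)"
  using assms unfolding cell_def by blast

lemma anchor_divisor_if_partitions_short:
  assumes "L \<in> cell G D dv prt m" and short: "\<forall>e\<in>edges G. length (prt e) \<le> 1"
  shows "anchor_divisor G L"
  unfolding anchor_divisor_def
proof (intro ballI allI impI)
  fix e s t
  assume e: "e \<in> edges G" and st: "0 < s \<and> s < len G e \<and> 0 < t \<and> t < len G e \<and> L (Pt e s) > 0 \<and> L (Pt e t) > 0"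
  obtain xs :: "real list" where xs: "length xs = length (prt e)"
    "\<forall>t. 0 < t \<and> t < len G e \<longrightarrow> L (Pt e t) = (\<Sum>i<length xs. if xs ! i = t then int (prt e ! i) else 0)"
    using cell_rep_edge_positions[OF assms(1) e] by blast
  have listed: "\<exists>i<length xs. xs ! i = x" if "0 < x" "x < len G e" "L (Pt e x) > 0" for x
  proof (rule ccontr)
    assume "\<not> ?thesis"
    then have "L (Pt e x) = 0" using xs(2) that(1,2) by (auto intro: sum.neutral)
    with that(3) show False by simp
  qed
  obtain i j where "i < length xs" "xs ! i = s" "j < length xs" "xs ! j = t"
    using listed[of s] listed[of t] st by blast
  moreover have "length xs \<le> 1" using short e xs(1) by simp
  ultimately show "s = t" by (metis less_one order_less_le_trans)
qed

lemma cell_rep_gap_if_partition_long: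
  assumes ok: "cell_data_ok prt" and L: "L \<in> cell G D dv prt m" and e: "e \<in> edges G"
    and long: "2 \<le> length (prt e)"
  obtains a b where "0 < a" "a < b" "b < len G e" "L (Pt e a) > 0" "L (Pt e b) > 0"
    "\<forall>t. a < t \<and> t < b \<longrightarrow> L (Pt e t) \<le> 0"
proof -
  obtain ys :: "real list" where ys: "length ys = length (prt e)" "sorted_wrt (<) ys"
    "\<forall>x\<in>set ys. 0 < x \<and> x < len G e"
    "\<forall>t. 0 < t \<and> t < len G e \<longrightarrow> L (Pt e t) = (\<Sum>i<length ys. if ys ! i = t then int (prt e ! i) else 0)"
    by (rule cell_rep_edge_positions[OF L e])
  have len: "0 < length ys" "1 < length ys" using ys(1) long by linarith+
  have inside: "0 < ys ! k \<and> ys ! k < len G e" if "k < length ys" for k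
    using ys(3) that nth_mem by blast
  have positive: "L (Pt e (ys ! k)) > 0" if "k < length ys" for k
  proof -
    have "0 < prt e ! k" using ok that ys(1) unfolding cell_data_ok_def by (metis nth_mem)
    then show ?thesis
      using ys(4) inside[OF that] sum_sorted_positions_single[OF ys(2) that, of "\<lambda>i. int (prt e ! i)"]
      by simp
  qed
  have gap: "L (Pt e t) \<le> 0" if t: "ys ! 0 < t" "t < ys ! 1" for t
  proof -
    have "ys ! k \<noteq> t" if k: "k < length ys" for k
    proof (cases "k \<le> 1")
      case True
      then have "k = 0 \<or> k = 1" by linarith
      then show ?thesis using t by auto
    next
      case False
      then show ?thesis using sorted_wrt_nth_less[OF ys(2), of 1 k] k t by simp
    qed
    then have "(\<Sum>i<length ys. if ys ! i = t then int (prt e ! i) else 0) = 0"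
      by (intro sum.neutral) auto
    moreover have "0 < t" "t < len G e"
      using t inside[OF len(1)] inside[OF len(2)] by linarith+
    ultimately show ?thesis using ys(4) by simp
  qed
  have "ys ! 0 < ys ! 1" using sorted_wrt_nth_less[OF ys(2) _ len(2)] by simp
  then show thesis
    using that inside[OF len(1)] inside[OF len(2)] positive[OF len(1)] positive[OF len(2)] gap
    by blast
qed

theorem lemma2p10:
  fixes G :: "('v, 'e) mgraph" and D :: "('v, 'e) divisor" and C :: "('v, 'e) divisor set"
  assumes "metric_graph G"
    and "is_divisor G D" and "effective D" and "vertex_supported G D"
    and "is_cell G D C"
    and "\<exists>L\<in>C. rep_dim G L = 0"
  shows "anchor_cell G C"
proof -
  obtain dv prt m where ok: "cell_data_ok prt" and C: "C = cell G D dv prt m"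
    using assms(5) unfolding is_cell_def by blast
  obtain L0 where L0: "L0 \<in> C" "rep_dim G L0 = 0" using assms(6) by blast
  have "length (prt e) \<le> 1" if e: "e \<in> edges G" for e
  proof (rule ccontr)
    assume "\<not> length (prt e) \<le> 1"
    then have "2 \<le> length (prt e)" by linarith
    then obtain a b where "0 < a" "a < b" "b < len G e" "L0 (Pt e a) > 0" "L0 (Pt e b) > 0"
      "\<forall>t. a < t \<and> t < b \<longrightarrow> L0 (Pt e t) \<le> 0"
      by (rule cell_rep_gap_if_partition_long[OF ok L0(1)[unfolded C] e])
    then show False using rep_dim_nonzero_if_gap[OF assms(1) e] L0(2) by blast
  qed
  then show ?thesis
    unfolding anchor_cell_def C using anchor_divisor_if_partitions_short by blast
qed

end
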